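(* Let $G=([n],E)$ be a graph and let $\pi\in S_n$ be a semi-proper permutation model of $G$. Then $\pi$ is a proper permutation model of $G$ if and only if, for every $i\in[n]$, $$ i + d^+(i) = \pi(i) + d^-(i).$$
   Context: $[n]=\{0,\dots,n-1\}$ and $S_n$ is the set of permutations of $[n]$. For $\pi\in S_n$, a pair $i,j\in[n]$ is a $\pi$-inversion if $(i-j)(\pi(i)-\pi(j))<0$. For a graph $G=([n],E)$, $\pi\in S_n$ is a proper permutation model of $G$ if for all $i,j$: $\{i,j\}\in E$ iff $i,j$ is a $\pi$-inversion; it is a semi-proper permutation model if every edge $\{i,j\}\in E$ is a $\pi$-inversion. $N^+(i)=\{j\in N(i): j>i\}$, $N^-(i)=\{j\in N(i): j<i\}$, $d^+(i)=|N^+(i)|$, $d^-(i)=|N^-(i)|$ (here $N(i)$ is the neighborhood of $i$ in the undirected graph $G$). *)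

theory Defs
  imports Main "HOL-Combinatorics.Permutations"
begin

definition simple_graph :: "nat \<Rightarrow> nat set set \<Rightarrow> bool" where
  "simple_graph n E \<longleftrightarrow> (\<forall>e\<in>E. \<exists>i j. e = {i, j} \<and> i \<noteq> j \<and> i < n \<and> j < n)"

definition is_inversion :: "(nat \<Rightarrow> nat) \<Rightarrow> nat \<Rightarrow> nat \<Rightarrow> bool" where
  "is_inversion \<pi> i j \<longleftrightarrow> (int i - int j) * (int (\<pi> i) - int (\<pi> j)) < 0"

definition proper_perm_model :: "nat \<Rightarrow> nat set set \<Rightarrow> (nat \<Rightarrow> nat) \<Rightarrow> bool" where
  "proper_perm_model n E \<pi> \<longleftrightarrow>
     (\<forall>i<n. \<forall>j<n. {i, j} \<in> E \<longleftrightarrow> is_inversion \<pi> i j)"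

definition semi_proper_perm_model :: "nat \<Rightarrow> nat set set \<Rightarrow> (nat \<Rightarrow> nat) \<Rightarrow> bool" where
  "semi_proper_perm_model n E \<pi> \<longleftrightarrow>
     (\<forall>i<n. \<forall>j<n. {i, j} \<in> E \<longrightarrow> is_inversion \<pi> i j)"

definition nbhd :: "nat \<Rightarrow> nat set set \<Rightarrow> nat \<Rightarrow> nat set" where
  "nbhd n E i = {j. j < n \<and> {i, j} \<in> E}"

definition nbhd_plus :: "nat \<Rightarrow> nat set set \<Rightarrow> nat \<Rightarrow> nat set" where
  "nbhd_plus n E i = {j \<in> nbhd n E i. j > i}"

definition nbhd_minus :: "nat \<Rightarrow> nat set set \<Rightarrow> nat \<Rightarrow> nat set" where
  "nbhd_minus n E i = {j \<in> nbhd n E i. j < i}"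

definition deg_plus :: "nat \<Rightarrow> nat set set \<Rightarrow> nat \<Rightarrow> nat" where
  "deg_plus n E i = card (nbhd_plus n E i)"

definition deg_minus :: "nat \<Rightarrow> nat set set \<Rightarrow> nat \<Rightarrow> nat" where
  "deg_minus n E i = card (nbhd_minus n E i)"

end

theory Submission
  imports Defs
begin

text \<open>
  Let \<open>I\<^sup>+(i)\<close> and \<open>I\<^sup>-(i)\<close> be the later and earlier partners of \<open>i\<close> in
  \<open>\<pi>\<close>-inversions. Counting the values below \<open>\<pi>(i)\<close> gives
  \<open>i + |I\<^sup>+(i)| = \<pi>(i) + |I\<^sup>-(i)|\<close> for every permutation, and a semi-proper model has
  \<open>N\<^sup>\<plusminus>(i) \<subseteq> I\<^sup>\<plusminus>(i)\<close>. So the degree condition says that at every vertex as many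
  non-edge inversions go up as go down. A proper model has none; conversely, by induction
  over the vertices, \<open>i\<close> has no downward non-edge inversion (they would be upward ones at
  smaller vertices), hence no upward one either.
\<close>

lemma is_inversion_commute: "is_inversion \<pi> i j \<longleftrightarrow> is_inversion \<pi> j i"
  unfolding is_inversion_def by (simp add: algebra_simps mult_less_0_iff)

lemma is_inversion_irrefl: "\<not> is_inversion \<pi> i i"
  unfolding is_inversion_def by simp

lemma is_inversion_iff_less: "i < j \<Longrightarrow> is_inversion \<pi> i j \<longleftrightarrow> \<pi> j < \<pi> i"
  unfolding is_inversion_def by (auto simp: mult_less_0_iff)

definition inv_nbhd :: "nat \<Rightarrow> (nat \<Rightarrow> nat) \<Rightarrow> nat \<Rightarrow> nat set" where
  "inv_nbhd n \<pi> i = {j. j < n \<and> is_inversion \<pi> i j}"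

definition inv_nbhd_plus :: "nat \<Rightarrow> (nat \<Rightarrow> nat) \<Rightarrow> nat \<Rightarrow> nat set" where
  "inv_nbhd_plus n \<pi> i = {j \<in> inv_nbhd n \<pi> i. j > i}"

definition inv_nbhd_minus :: "nat \<Rightarrow> (nat \<Rightarrow> nat) \<Rightarrow> nat \<Rightarrow> nat set" where
  "inv_nbhd_minus n \<pi> i = {j \<in> inv_nbhd n \<pi> i. j < i}"

lemma semi_proper_perm_model_iff_nbhd_subset:
  "semi_proper_perm_model n E \<pi> \<longleftrightarrow> (\<forall>i<n. nbhd n E i \<subseteq> inv_nbhd n \<pi> i)"
  unfolding semi_proper_perm_model_def nbhd_def inv_nbhd_def by blast

lemma proper_perm_model_iff_nbhd_eq:
  "proper_perm_model n E \<pi> \<longleftrightarrow> (\<forall>i<n. nbhd n E i = inv_nbhd n \<pi> i)"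
  unfolding proper_perm_model_def nbhd_def inv_nbhd_def by blast

lemma card_permutes_less:
  assumes "\<pi> permutes {..<n}" and "y \<le> n"
  shows "card {j. j < n \<and> \<pi> j < y} = y"
proof -
  have "inj_on \<pi> {j. j < n \<and> \<pi> j < y}"
    using permutes_inj_on[OF assms(1)] by (rule inj_on_subset) auto
  moreover have "\<pi> ` {j. j < n \<and> \<pi> j < y} = {..<y}"
    using permutes_image[OF assms(1)] assms(2) by (auto simp: image_iff)
  ultimately show ?thesis
    by (metis card_image card_lessThan)
qed

lemma card_inv_nbhd_plus_minus:
  assumes \<pi>: "\<pi> permutes {..<n}" and "i < n"
  shows "i + card (inv_nbhd_plus n \<pi> i) = \<pi> i + card (inv_nbhd_minus n \<pi> i)"
proof -
  let ?below = "{j. j < i \<and> \<pi> j < \<pi> i}"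
  have plus: "inv_nbhd_plus n \<pi> i = {j. j < n \<and> i < j \<and> \<pi> j < \<pi> i}"
    by (auto simp: inv_nbhd_plus_def inv_nbhd_def is_inversion_iff_less)
  have minus: "inv_nbhd_minus n \<pi> i = {j. j < i \<and> \<pi> i < \<pi> j}"
    using \<open>i < n\<close> by (auto simp: inv_nbhd_minus_def inv_nbhd_def is_inversion_commute is_inversion_iff_less)
  have "\<pi> i < n"
    using permutes_in_image[OF \<pi>] \<open>i < n\<close> by simp
  then have "\<pi> i = card {j. j < n \<and> \<pi> j < \<pi> i}"
    using card_permutes_less[OF \<pi>] by simp
  also have "{j. j < n \<and> \<pi> j < \<pi> i} = ?below \<union> inv_nbhd_plus n \<pi> i"
    using \<open>i < n\<close> by (auto simp: plus) (metis less_irrefl nat_neq_iff)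
  also have "card \<dots> = card ?below + card (inv_nbhd_plus n \<pi> i)"
    by (rule card_Un_disjoint) (auto simp: plus)
  finally have smaller_values: "\<pi> i = card ?below + card (inv_nbhd_plus n \<pi> i)" .
  have "i = card {..<i}"
    by simp
  also have "{..<i} = ?below \<union> inv_nbhd_minus n \<pi> i"
    using inj_eq[OF permutes_inj[OF \<pi>]] by (auto simp: minus) (metis nat_neq_iff less_irrefl)
  also have "card \<dots> = card ?below + card (inv_nbhd_minus n \<pi> i)"
    by (rule card_Un_disjoint) (auto simp: minus)
  finally have "i = card ?below + card (inv_nbhd_minus n \<pi> i)" .
  with smaller_values show ?thesis
    by linarith
qed

lemma nbhd_eq_inv_nbhd_if_balanced:
  assumes sub: "\<And>i. i < n \<Longrightarrow> nbhd n E i \<subseteq> inv_nbhd n \<pi> i"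
    and balanced: "\<And>i. i < n \<Longrightarrow>
      deg_plus n E i + card (inv_nbhd_minus n \<pi> i) = deg_minus n E i + card (inv_nbhd_plus n \<pi> i)"
  shows "i < n \<Longrightarrow> nbhd n E i = inv_nbhd n \<pi> i"
proof (induction i rule: less_induct)
  case (less i)
  have "inv_nbhd_minus n \<pi> i \<subseteq> nbhd_minus n E i"
  proof
    fix j assume "j \<in> inv_nbhd_minus n \<pi> i"
    then have "j < i" and "i \<in> inv_nbhd n \<pi> j"
      using less.prems by (auto simp: inv_nbhd_minus_def inv_nbhd_def is_inversion_commute)
    then have "i \<in> nbhd n E j"
      using less.IH less.prems by simp
    then show "j \<in> nbhd_minus n E i"
      using \<open>j < i\<close> less.prems by (auto simp: nbhd_minus_def nbhd_def insert_commute)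
  qed
  moreover have "nbhd_minus n E i \<subseteq> inv_nbhd_minus n \<pi> i"
    using sub[OF less.prems] by (auto simp: nbhd_minus_def inv_nbhd_minus_def)
  ultimately have minus: "nbhd_minus n E i = inv_nbhd_minus n \<pi> i"
    by blast
  have "nbhd_plus n E i \<subseteq> inv_nbhd_plus n \<pi> i"
    using sub[OF less.prems] by (auto simp: nbhd_plus_def inv_nbhd_plus_def)
  moreover have "card (nbhd_plus n E i) = card (inv_nbhd_plus n \<pi> i)"
    using balanced[OF less.prems] minus by (simp add: deg_plus_def deg_minus_def)
  moreover have "finite (inv_nbhd_plus n \<pi> i)"
    by (simp add: inv_nbhd_plus_def inv_nbhd_def)
  ultimately have plus: "nbhd_plus n E i = inv_nbhd_plus n \<pi> i"
    using card_subset_eq by blast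
  have split: "S = {j \<in> S. j > i} \<union> {j \<in> S. j < i}" if "i \<notin> S" for S :: "nat set"
    using that by (auto simp: not_less_iff_gr_or_eq)
  have "i \<notin> inv_nbhd n \<pi> i"
    by (simp add: inv_nbhd_def is_inversion_irrefl)
  then have "i \<notin> nbhd n E i"
    using sub[OF less.prems] by blast
  then show ?case
    using split[of "nbhd n E i"] split[of "inv_nbhd n \<pi> i"] \<open>i \<notin> inv_nbhd n \<pi> i\<close> plus minus
    unfolding nbhd_plus_def nbhd_minus_def inv_nbhd_plus_def inv_nbhd_minus_def by simp
qed

theorem lemma1:
  fixes n :: nat and E :: "nat set set" and \<pi> :: "nat \<Rightarrow> nat"
  assumes "simple_graph n E"
    and "\<pi> permutes {..<n}"
    and "semi_proper_perm_model n E \<pi>"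
  shows "proper_perm_model n E \<pi> \<longleftrightarrow>
         (\<forall>i<n. i + deg_plus n E i = \<pi> i + deg_minus n E i)"
proof -
  have sub: "\<And>i. i < n \<Longrightarrow> nbhd n E i \<subseteq> inv_nbhd n \<pi> i"
    using assms(3) semi_proper_perm_model_iff_nbhd_subset by blast
  have degree_condition_iff: "i + deg_plus n E i = \<pi> i + deg_minus n E i \<longleftrightarrow>
      deg_plus n E i + card (inv_nbhd_minus n \<pi> i) = deg_minus n E i + card (inv_nbhd_plus n \<pi> i)"
    if "i < n" for i
    using card_inv_nbhd_plus_minus[OF assms(2) that] by linarith
  have balanced_if_eq: "deg_plus n E i + card (inv_nbhd_minus n \<pi> i) =
      deg_minus n E i + card (inv_nbhd_plus n \<pi> i)"
    if "nbhd n E i = inv_nbhd n \<pi> i" for i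
    using that by (simp add: deg_plus_def deg_minus_def nbhd_plus_def nbhd_minus_def
        inv_nbhd_plus_def inv_nbhd_minus_def)
  show ?thesis
    unfolding proper_perm_model_iff_nbhd_eq
    using nbhd_eq_inv_nbhd_if_balanced[OF sub] balanced_if_eq degree_condition_iff by metis
qed

end
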